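(* Let $n=2k+1$ with $k\ge 1$. Then $W=\{a_1,a_{k+1}\}$ is a local resolving set of $U_n$.
   Context: For $n\ge 3$, $U_n$ is the graph with vertex set $\{a_i,b_i,c_i,d_i,e_i : 1\le i\le n\}$ and edge set $\{a_ia_{i+1}, b_ib_{i+1}, e_ie_{i+1}, a_ib_i, b_ic_i, c_id_i, d_ie_i, c_{i+1}d_i : 1\le i\le n\}$, indices taken modulo $n$. A vertex $w$ resolves $u,v$ if $d(u,w)\neq d(v,w)$ ($d$ the graph distance). A set $W$ is a local resolving set if every two adjacent vertices are resolved by some element of $W$. *)

theory Defs
  imports Main
begin

text \<open>Vertices of U_n. The paper's vertex x_i (1 \<le> i \<le> n) is represented as X (i-1),
  so indices range over {0..<n} and are taken modulo n.\<close>
datatype vtx = A nat | B nat | C nat | D nat | E nat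

definition U_vertices :: "nat \<Rightarrow> vtx set" where
  "U_vertices n = (\<Union>i\<in>{0..<n}. {A i, B i, C i, D i, E i})"

definition U_edge0 :: "nat \<Rightarrow> vtx \<Rightarrow> vtx \<Rightarrow> bool" where
  "U_edge0 n u v \<longleftrightarrow> (\<exists>i<n.
      (u = A i \<and> v = A ((i+1) mod n)) \<or>
      (u = B i \<and> v = B ((i+1) mod n)) \<or>
      (u = E i \<and> v = E ((i+1) mod n)) \<or>
      (u = A i \<and> v = B i) \<or>
      (u = B i \<and> v = C i) \<or>
      (u = C i \<and> v = D i) \<or>
      (u = D i \<and> v = E i) \<or>
      (u = C ((i+1) mod n) \<and> v = D i))"

definition U_adj :: "nat \<Rightarrow> vtx \<Rightarrow> vtx \<Rightarrow> bool" where
  "U_adj n u v \<longleftrightarrow> U_edge0 n u v \<or> U_edge0 n v u"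

fun is_walk :: "('a \<Rightarrow> 'a \<Rightarrow> bool) \<Rightarrow> 'a list \<Rightarrow> bool" where
  "is_walk adj [] = False"
| "is_walk adj [x] = True"
| "is_walk adj (x # y # xs) = (adj x y \<and> is_walk adj (y # xs))"

definition gdist :: "('a \<Rightarrow> 'a \<Rightarrow> bool) \<Rightarrow> 'a \<Rightarrow> 'a \<Rightarrow> nat" where
  "gdist adj u v = (LEAST k. \<exists>p. is_walk adj p \<and> hd p = u \<and> last p = v \<and> length p = k + 1)"

definition resolves :: "('a \<Rightarrow> 'a \<Rightarrow> bool) \<Rightarrow> 'a \<Rightarrow> 'a \<Rightarrow> 'a \<Rightarrow> bool" where
  "resolves adj w u v \<longleftrightarrow> gdist adj u w \<noteq> gdist adj v w"

definition local_resolving_set :: "'a set \<Rightarrow> ('a \<Rightarrow> 'a \<Rightarrow> bool) \<Rightarrow> 'a set \<Rightarrow> bool" where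
  "local_resolving_set V adj W \<longleftrightarrow> W \<subseteq> V \<and>
     (\<forall>u\<in>V. \<forall>v\<in>V. adj u v \<longrightarrow> (\<exists>w\<in>W. resolves adj w u v))"

end

theory Submission
  imports Defs
begin

text \<open>The distance from a vertex of U_n to A c has a closed form: for a_i, b_i, c_i it is the
  distance from i to c on the n-cycle plus 0, 1, 2, and for d_i, e_i it is the distance from c to
  the nearer of i, i+1 plus 3, 4. It is confirmed by checking that the formula changes by at most
  one along edges and can always be decreased by one along an edge. For n = 2k+1, two consecutive
  positions (or consecutive edges) of the odd cycle are equidistant only from the position opposite
  to them, and the opposite places of 0 and k differ; a c-d edge can only be unresolved if stepping
  from i to i+1, or back, approaches 0 and k at once, which never happens. The remaining edges join
  vertices at depths differing by one.\<close>

lemma walk_potential_lower_bound: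
  assumes lip: "\<And>x y. adj x y \<Longrightarrow> (g x :: nat) \<le> g y + 1"
  shows "is_walk adj (x # p) \<Longrightarrow> g x \<le> g (last (x # p)) + length p"
proof (induction p arbitrary: x)
  case Nil
  show ?case by simp
next
  case (Cons y p)
  then have "adj x y" and "is_walk adj (y # p)" by auto
  then have "g x \<le> g y + 1" and "g y \<le> g (last (y # p)) + length p"
    using lip Cons.IH by blast+
  then show ?case by simp
qed

lemma walk_to_potential_zero:
  assumes descend: "\<And>v. P v \<Longrightarrow> 0 < (g v :: nat) \<Longrightarrow> \<exists>u. adj v u \<and> P u \<and> g u + 1 = g v"
    and zero: "\<And>v. P v \<Longrightarrow> g v = 0 \<Longrightarrow> v = w"
  shows "P v \<Longrightarrow> \<exists>p. is_walk adj p \<and> hd p = v \<and> last p = w \<and> length p = g v + 1"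
proof (induction "g v" arbitrary: v)
  case 0
  then show ?case using zero[of v] by (intro exI[of _ "[v]"]) auto
next
  case (Suc m)
  then obtain u where u: "adj v u" "P u" "g u + 1 = g v" using descend[of v] by auto
  with Suc obtain p where p: "is_walk adj p" "hd p = u" "last p = w" "length p = g u + 1"
    by (metis add_right_cancel Suc_eq_plus1)
  then obtain ps where "p = u # ps" by (cases p) auto
  with p u show ?case by (intro exI[of _ "v # p"]) auto
qed

lemma gdist_eq_potential:
  assumes lip: "\<And>x y. adj x y \<Longrightarrow> (g x :: nat) \<le> g y + 1"
    and descend: "\<And>v. P v \<Longrightarrow> 0 < g v \<Longrightarrow> \<exists>u. adj v u \<and> P u \<and> g u + 1 = g v"
    and zero: "\<And>v. P v \<Longrightarrow> g v = 0 \<Longrightarrow> v = w"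
    and "P v" and "g w = 0"
  shows "gdist adj v w = g v"
  unfolding gdist_def
proof (rule Least_equality)
  show "\<exists>p. is_walk adj p \<and> hd p = v \<and> last p = w \<and> length p = g v + 1"
    using walk_to_potential_zero[of P g adj w, OF descend zero \<open>P v\<close>] .
next
  fix l assume "\<exists>p. is_walk adj p \<and> hd p = v \<and> last p = w \<and> length p = l + 1"
  then obtain x p where "is_walk adj (x # p)" "x = v" "last (x # p) = w" "length p = l"
    by (metis append_eq_Cons_conv length_Suc_conv list.sel(1) Suc_eq_plus1)
  then show "g v \<le> l"
    using walk_potential_lower_bound[of adj g, OF lip] \<open>g w = 0\<close> by fastforce
qed

definition cyc_dist :: "nat \<Rightarrow> nat \<Rightarrow> nat \<Rightarrow> nat" where
  "cyc_dist n c i = (if i \<le> c then min (c - i) (n - (c - i)) else min (i - c) (n - (i - c)))"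

lemma Suc_mod_eq_if: "i < n \<Longrightarrow> Suc i mod n = (if Suc i = n then 0 else Suc i)"
  by auto

lemma cyc_dist_Suc_mod:
  assumes "i < n" and "c < n"
  shows "cyc_dist n c (Suc i mod n) \<le> cyc_dist n c i + 1"
    and "cyc_dist n c i \<le> cyc_dist n c (Suc i mod n) + 1"
  using assms
  by (cases "Suc i = n"; cases "i < c"; cases "i = c"; simp add: Suc_mod_eq_if cyc_dist_def min_def;
      arith)+

lemma cyc_dist_eq_0_iff: "i < n \<Longrightarrow> c < n \<Longrightarrow> cyc_dist n c i = 0 \<longleftrightarrow> i = c"
  by (auto simp: cyc_dist_def min_def)

lemma cyc_dist_descend:
  assumes "i < n" and "c < n" and "0 < cyc_dist n c i"
  obtains (succ) "cyc_dist n c (Suc i mod n) + 1 = cyc_dist n c i"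
  | (pred) j where "j < n" and "Suc j mod n = i" and "cyc_dist n c j + 1 = cyc_dist n c i"
proof -
  define j where "j = (if i = 0 then n - 1 else i - 1)"
  have j: "j < n" "Suc j mod n = i" using assms(1) by (auto simp: j_def)
  have "i \<noteq> c" using assms(3) by (auto simp: cyc_dist_def)
  then consider (below_near) "i < c" "2 * (c - i) \<le> n" | (below_far) "i < c" "n < 2 * (c - i)"
    | (above_near) "c < i" "2 * (i - c) \<le> n" | (above_far) "c < i" "n < 2 * (i - c)"
    by linarith
  then show ?thesis
  proof cases
    case below_near
    then have "Suc i mod n = Suc i" using assms(2) by simp
    then show ?thesis using below_near by (intro succ) (simp add: cyc_dist_def min_def, linarith)
  next
    case below_far
    then have "cyc_dist n c j + 1 = cyc_dist n c i"
      using assms(2) by (cases "i = 0"; simp add: j_def cyc_dist_def min_def; linarith)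
    then show ?thesis using j by (rule pred[rotated 2])
  next
    case above_near
    then have "cyc_dist n c j + 1 = cyc_dist n c i" by (simp add: j_def cyc_dist_def min_def; linarith)
    then show ?thesis using j by (rule pred[rotated 2])
  next
    case above_far
    then have "cyc_dist n c (Suc i mod n) + 1 = cyc_dist n c i"
      using assms(1) by (cases "Suc i = n"; simp add: cyc_dist_def min_def; linarith)
    then show ?thesis by (rule succ)
  qed
qed

definition cyc_edge_dist :: "nat \<Rightarrow> nat \<Rightarrow> nat \<Rightarrow> nat" where
  "cyc_edge_dist n c i = min (cyc_dist n c i) (cyc_dist n c (Suc i mod n))"

lemma cyc_edge_dist_bounds:
  assumes "i < n" and "c < n"
  shows "cyc_edge_dist n c i \<le> cyc_dist n c i" and "cyc_dist n c i \<le> cyc_edge_dist n c i + 1"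
    and "cyc_edge_dist n c i \<le> cyc_dist n c (Suc i mod n)"
    and "cyc_dist n c (Suc i mod n) \<le> cyc_edge_dist n c i + 1"
  using cyc_dist_Suc_mod[OF assms] by (auto simp: cyc_edge_dist_def)

text \<open>D i hangs below both C i and C (i+1), hence the distance to the edge {i, i+1}.\<close>
definition dist_A :: "nat \<Rightarrow> nat \<Rightarrow> vtx \<Rightarrow> nat" where
  "dist_A n c v = (case v of
       A i \<Rightarrow> cyc_dist n c i
     | B i \<Rightarrow> cyc_dist n c i + 1
     | C i \<Rightarrow> cyc_dist n c i + 2
     | D i \<Rightarrow> cyc_edge_dist n c i + 3
     | E i \<Rightarrow> cyc_edge_dist n c i + 4)"

lemma U_edge0E:
  assumes "U_edge0 n u v"
  obtains (AA) i where "i < n" "u = A i" "v = A (Suc i mod n)"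
  | (BB) i where "i < n" "u = B i" "v = B (Suc i mod n)"
  | (EE) i where "i < n" "u = E i" "v = E (Suc i mod n)"
  | (AB) i where "i < n" "u = A i" "v = B i"
  | (BC) i where "i < n" "u = B i" "v = C i"
  | (CD) i where "i < n" "u = C i" "v = D i"
  | (DE) i where "i < n" "u = D i" "v = E i"
  | (CD_Suc) i where "i < n" "u = C (Suc i mod n)" "v = D i"
  using assms unfolding U_edge0_def by auto

fun vtx_index :: "vtx \<Rightarrow> nat" where
  "vtx_index (A i) = i" | "vtx_index (B i) = i" | "vtx_index (C i) = i"
| "vtx_index (D i) = i" | "vtx_index (E i) = i"

lemma mem_U_vertices_iff: "v \<in> U_vertices n \<longleftrightarrow> vtx_index v < n"
  by (cases v) (auto simp: U_vertices_def)

lemma U_edge0_in_U_vertices: "U_edge0 n u v \<Longrightarrow> u \<in> U_vertices n \<and> v \<in> U_vertices n"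
  by (erule U_edge0E) (auto simp: mem_U_vertices_iff)

lemma dist_A_U_edge0:
  assumes "U_edge0 n u v" and "c < n"
  shows "dist_A n c u \<le> dist_A n c v + 1 \<and> dist_A n c v \<le> dist_A n c u + 1"
  using assms(1)
proof (cases rule: U_edge0E)
  case (EE i)
  have "Suc i mod n < n" using EE(1) by simp
  with EE show ?thesis
    using cyc_edge_dist_bounds[OF EE(1) \<open>c < n\<close>] cyc_edge_dist_bounds[of "Suc i mod n" n c] \<open>c < n\<close>
    by (auto simp: dist_A_def)
qed (auto simp: dist_A_def dest: cyc_dist_Suc_mod[OF _ \<open>c < n\<close>] cyc_edge_dist_bounds[OF _ \<open>c < n\<close>])

lemma dist_A_U_adj: "U_adj n u v \<Longrightarrow> c < n \<Longrightarrow> dist_A n c u \<le> dist_A n c v + 1"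
  unfolding U_adj_def using dist_A_U_edge0 by blast

lemma dist_A_descend:
  assumes "v \<in> U_vertices n" and "c < n" and "0 < dist_A n c v"
  shows "\<exists>u. U_adj n v u \<and> u \<in> U_vertices n \<and> dist_A n c u + 1 = dist_A n c v"
proof -
  have "\<exists>u. (U_edge0 n v u \<or> U_edge0 n u v) \<and> dist_A n c u + 1 = dist_A n c v"
  proof (cases v)
    case (A i)
    with assms have "i < n" and pos: "0 < cyc_dist n c i"
      by (auto simp: mem_U_vertices_iff dist_A_def)
    from \<open>i < n\<close> \<open>c < n\<close> pos show ?thesis
    proof (cases rule: cyc_dist_descend)
      case succ
      with A \<open>i < n\<close> show ?thesis
        by (intro exI[of _ "A (Suc i mod n)"]) (auto simp: U_edge0_def dist_A_def)
    next
      case (pred j)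
      with A show ?thesis
        by (intro exI[of _ "A j"]) (auto simp: U_edge0_def dist_A_def)
    qed
  next
    case (D i)
    with assms have "i < n" by (simp add: mem_U_vertices_iff)
    show ?thesis
    proof (cases "cyc_dist n c i \<le> cyc_dist n c (Suc i mod n)")
      case True
      with D \<open>i < n\<close> show ?thesis
        by (intro exI[of _ "C i"]) (auto simp: U_edge0_def dist_A_def cyc_edge_dist_def)
    next
      case False
      with D \<open>i < n\<close> show ?thesis
        by (intro exI[of _ "C (Suc i mod n)"]) (auto simp: U_edge0_def dist_A_def cyc_edge_dist_def)
    qed
  next
    case (B i)
    with assms(1) show ?thesis
      by (intro exI[of _ "A i"]) (auto simp: mem_U_vertices_iff U_edge0_def dist_A_def)
  next
    case (C i)
    with assms(1) show ?thesis
      by (intro exI[of _ "B i"]) (auto simp: mem_U_vertices_iff U_edge0_def dist_A_def)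
  next
    case (E i)
    with assms(1) show ?thesis
      by (intro exI[of _ "D i"]) (auto simp: mem_U_vertices_iff U_edge0_def dist_A_def)
  qed
  then show ?thesis
    unfolding U_adj_def using U_edge0_in_U_vertices by blast
qed

lemma dist_A_eq_0_iff:
  "v \<in> U_vertices n \<Longrightarrow> c < n \<Longrightarrow> dist_A n c v = 0 \<longleftrightarrow> v = A c"
  by (cases v) (auto simp: dist_A_def mem_U_vertices_iff cyc_dist_eq_0_iff)

lemma gdist_U_A:
  assumes "c < n" and "v \<in> U_vertices n"
  shows "gdist (U_adj n) v (A c) = dist_A n c v"
proof (rule gdist_eq_potential[where P = "\<lambda>v. v \<in> U_vertices n"])
  show "dist_A n c (A c) = 0"
    using dist_A_eq_0_iff[of "A c" n c] \<open>c < n\<close> by (simp add: mem_U_vertices_iff)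
qed (use assms dist_A_U_adj dist_A_descend dist_A_eq_0_iff in blast)+

lemma cyc_dist_odd:
  assumes "n = 2 * k + 1" and "i < n"
  shows "cyc_dist n 0 i = (if i \<le> k then i else n - i)"
    and "cyc_dist n k i = (if i \<le> k then k - i else i - k)"
  using assms by (auto simp: cyc_dist_def min_def)

lemma cyc_edge_dist_odd:
  assumes n: "n = 2 * k + 1" and "i < n"
  shows "cyc_edge_dist n 0 i = (if i < k then i else 2 * k - i)"
    and "cyc_edge_dist n k i = (if i < k then k - Suc i else i - k)"
proof -
  have "Suc i mod n < n" using n by simp
  note cyc_values = cyc_dist_odd[OF n \<open>i < n\<close>] cyc_dist_odd[OF n \<open>Suc i mod n < n\<close>]
  show "cyc_edge_dist n 0 i = (if i < k then i else 2 * k - i)"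
    and "cyc_edge_dist n k i = (if i < k then k - Suc i else i - k)"
    unfolding cyc_edge_dist_def cyc_values using \<open>i < n\<close> n by (auto simp: Suc_mod_eq_if)
qed

lemma odd_cycle_resolved_by_0_k:
  assumes n: "n = 2 * k + 1" and "1 \<le> k" and "i < n"
  shows "cyc_dist n 0 i \<noteq> cyc_dist n 0 (Suc i mod n) \<or> cyc_dist n k i \<noteq> cyc_dist n k (Suc i mod n)"
proof -
  have "Suc i mod n < n" using n by simp
  note cyc_values = cyc_dist_odd[OF n \<open>i < n\<close>] cyc_dist_odd[OF n \<open>Suc i mod n < n\<close>]
  show ?thesis
    unfolding cyc_values using assms by (auto simp: Suc_mod_eq_if)
qed

lemma odd_cycle_edges_resolved_by_0_k:
  assumes n: "n = 2 * k + 1" and "1 \<le> k" and "i < n"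
  shows "cyc_edge_dist n 0 i \<noteq> cyc_edge_dist n 0 (Suc i mod n)
    \<or> cyc_edge_dist n k i \<noteq> cyc_edge_dist n k (Suc i mod n)"
proof -
  have "Suc i mod n < n" using n by simp
  note edge_values = cyc_edge_dist_odd[OF n \<open>i < n\<close>] cyc_edge_dist_odd[OF n \<open>Suc i mod n < n\<close>]
  show ?thesis
    unfolding edge_values using assms by (auto simp: Suc_mod_eq_if)
qed

lemma odd_cycle_spokes_resolved_by_0_k:
  assumes n: "n = 2 * k + 1" and "i < n"
  shows "cyc_dist n 0 i \<noteq> cyc_edge_dist n 0 i + 1 \<or> cyc_dist n k i \<noteq> cyc_edge_dist n k i + 1"
    and "cyc_dist n 0 (Suc i mod n) \<noteq> cyc_edge_dist n 0 i + 1
      \<or> cyc_dist n k (Suc i mod n) \<noteq> cyc_edge_dist n k i + 1"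
proof -
  have "Suc i mod n < n" using n by simp
  note cyc_values = cyc_dist_odd[OF n \<open>i < n\<close>] cyc_dist_odd[OF n \<open>Suc i mod n < n\<close>]
  note edge_values = cyc_edge_dist_odd[OF n \<open>i < n\<close>]
  show "cyc_dist n 0 i \<noteq> cyc_edge_dist n 0 i + 1 \<or> cyc_dist n k i \<noteq> cyc_edge_dist n k i + 1"
    and "cyc_dist n 0 (Suc i mod n) \<noteq> cyc_edge_dist n 0 i + 1
      \<or> cyc_dist n k (Suc i mod n) \<noteq> cyc_edge_dist n k i + 1"
    unfolding edge_values cyc_values using assms by (auto simp: Suc_mod_eq_if)
qed

lemma dist_A_0_k_resolve_U_edge0:
  assumes n: "n = 2 * k + 1" and "1 \<le> k" and "U_edge0 n u v"
  shows "dist_A n 0 u \<noteq> dist_A n 0 v \<or> dist_A n k u \<noteq> dist_A n k v"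
  using assms(3)
proof (cases rule: U_edge0E)
  case (AA i)
  then show ?thesis using odd_cycle_resolved_by_0_k[OF n \<open>1 \<le> k\<close>] by (simp add: dist_A_def)
next
  case (BB i)
  then show ?thesis using odd_cycle_resolved_by_0_k[OF n \<open>1 \<le> k\<close>] by (simp add: dist_A_def)
next
  case (EE i)
  then show ?thesis using odd_cycle_edges_resolved_by_0_k[OF n \<open>1 \<le> k\<close>] by (simp add: dist_A_def)
next
  case (CD i)
  then show ?thesis using odd_cycle_spokes_resolved_by_0_k(1)[OF n] by (auto simp: dist_A_def)
next
  case (CD_Suc i)
  then show ?thesis using odd_cycle_spokes_resolved_by_0_k(2)[OF n] by (auto simp: dist_A_def)
qed (simp_all add: dist_A_def)

theorem lemma4p3:
  fixes k n :: nat
  assumes "k \<ge> 1" and "n = 2 * k + 1"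
  shows "local_resolving_set (U_vertices n) (U_adj n) {A 0, A k}"
  unfolding local_resolving_set_def
proof (intro conjI ballI impI)
  have "0 < n" and "k < n" using assms by auto
  then show "{A 0, A k} \<subseteq> U_vertices n" by (simp add: mem_U_vertices_iff)
  fix u v assume "u \<in> U_vertices n" and "v \<in> U_vertices n" and "U_adj n u v"
  then have "dist_A n 0 u \<noteq> dist_A n 0 v \<or> dist_A n k u \<noteq> dist_A n k v"
    using dist_A_0_k_resolve_U_edge0[OF assms(2,1)] unfolding U_adj_def by metis
  then show "\<exists>w\<in>{A 0, A k}. resolves (U_adj n) w u v"
    unfolding resolves_def
    using gdist_U_A[OF \<open>0 < n\<close>] gdist_U_A[OF \<open>k < n\<close>] \<open>u \<in> U_vertices n\<close> \<open>v \<in> U_vertices n\<close>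
    by auto
qed

end
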